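(* Let $S=\sigma_0,\dots,\sigma_l$ be an $H$-recoloring sequence of $G$, and let $W$ be any walk in $G$ from a vertex $u$ to a vertex $v$. Then $$\overline{S(v)} = \overline{\sigma_0(W)}^{-1}\cdot \overline{S(u)}\cdot \overline{\sigma_l(W)}.$$
   Context: All graphs are finite and undirected. $G$ is a connected loopless graph with at least one edge. $H$ is a connected graph with at least one edge, possibly with loops, having the monochromatic neighborhood property: for all $a,b\in V(H)$, $|N_H(a)\cap N_H(b)|\le 1$, where $N_H(a)=\{w: aw\in E(H)\}$ (so $a\in N_H(a)$ iff $H$ has a loop at $a$). An $H$-coloring of $G$ is a map $\sigma:V(G)\to V(H)$ such that $uv\in E(G)$ implies $\sigma(u)\sigma(v)\in E(H)$. An $H$-recoloring sequence is a sequence $\sigma_0,\dots,\sigma_l$ of $H$-colorings of $G$ in which any two consecutive colorings differ in the color of exactly one vertex. Walks: an oriented edge of a graph is an ordered pair $(x,y)$ with $xy$ an edge; $(x,y)^{-1}=(y,x)$. A walk from $x$ to $y$ is a sequence of oriented edges $e_1\dots e_k$ where $e_1$ starts at $x$, $e_k$ ends at $y$, and each $e_{i+1}$ starts where $e_i$ ends; $\varepsilon$ denotes the empty walk; the length is $k$; $W_1W_2$ is concatenation and $W^{-1}=e_k^{-1}\dots e_1^{-1}$. A walk is reduced if it has no two consecutive edges $e_ie_{i+1}$ with $e_{i+1}=e_i^{-1}$; $\overline{W}$ denotes the (unique) reduced walk obtained from $W$ by repeatedly deleting such consecutive pairs. For reduced walks $A,B$ with $B$ starting where $A$ ends, $A\cdot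 B:=\overline{AB}$ (an associative partial operation). $\pi(H)$ (the fundamental groupoid) is the set of reduced walks in $H$ with $\cdot$ and inversion. For a walk $W=(x_0,x_1)(x_1,x_2)\dots(x_{k-1},x_k)$ in $G$ and an $H$-coloring $\alpha$, $\alpha(W)$ is the walk $(\alpha(x_0),\alpha(x_1))\dots(\alpha(x_{k-1}),\alpha(x_k))$ in $H$. Vertex walks: if $\sigma_1$ is obtained from $\sigma_0$ by changing the color of one vertex $w$ from $a$ to $b\neq a$, then all neighbors of $w$ have the same color $h$ in $\sigma_0$ and $\sigma_1$ (the unique element of $N_H(a)\cap N_H(b)$). For this one-step sequence $S=\sigma_0,\sigma_1$ define, for $v\in V(G)$, $S(v)=\varepsilon$ if $v\neq w$ and $S(w)=(a,h)(h,b)$. For the empty sequence ($l=0$) $S(v)=\varepsilon$, and for $S=\sigma_0,\dots,\sigma_l$ with $l>1$, $S(v)=S_1(v)S_2(v)\cdots S_l(v)$ where $S_i$ is the one-step sequence $\sigma_{i-1},\sigma_i$. Thus $S(v)$ is a walk in $H$ from $\sigma_0(v)$ to $\sigma_l(v)$. *)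

theory Defs
  imports Main
begin

text \<open>Graphs: a vertex set V and a symmetric edge relation E on V (loops allowed unless excluded).
Oriented edges are pairs; walks are lists of oriented edges.\<close>

definition graph :: "'v set \<Rightarrow> ('v \<Rightarrow> 'v \<Rightarrow> bool) \<Rightarrow> bool" where
  "graph V E \<longleftrightarrow> finite V \<and> (\<forall>x y. E x y \<longrightarrow> x \<in> V \<and> y \<in> V) \<and> (\<forall>x y. E x y \<longrightarrow> E y x)"

fun walk :: "('v \<Rightarrow> 'v \<Rightarrow> bool) \<Rightarrow> 'v \<Rightarrow> ('v \<times> 'v) list \<Rightarrow> 'v \<Rightarrow> bool" where
  "walk E x [] y \<longleftrightarrow> x = y"
| "walk E x (e # W) y \<longleftrightarrow> fst e = x \<and> E (fst e) (snd e) \<and> walk E (snd e) W y"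

definition connected_graph :: "'v set \<Rightarrow> ('v \<Rightarrow> 'v \<Rightarrow> bool) \<Rightarrow> bool" where
  "connected_graph V E \<longleftrightarrow> (\<forall>x\<in>V. \<forall>y\<in>V. \<exists>W. walk E x W y)"

definition nbhd :: "('v \<Rightarrow> 'v \<Rightarrow> bool) \<Rightarrow> 'v \<Rightarrow> 'v set" where
  "nbhd E a = {w. E a w}"

definition monochromatic_nbhd :: "'v set \<Rightarrow> ('v \<Rightarrow> 'v \<Rightarrow> bool) \<Rightarrow> bool" where
  "monochromatic_nbhd V E \<longleftrightarrow> (\<forall>a\<in>V. \<forall>b\<in>V. a \<noteq> b \<longrightarrow> card (nbhd E a \<inter> nbhd E b) \<le> 1)"

definition einv :: "'v \<times> 'v \<Rightarrow> 'v \<times> 'v" where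
  "einv e = (snd e, fst e)"

definition winv :: "('v \<times> 'v) list \<Rightarrow> ('v \<times> 'v) list" where
  "winv W = rev (map einv W)"

definition reduced :: "('v \<times> 'v) list \<Rightarrow> bool" where
  "reduced W \<longleftrightarrow> (\<forall>i. Suc i < length W \<longrightarrow> W ! Suc i \<noteq> einv (W ! i))"

definition cancel1 :: "('v \<times> 'v) list \<Rightarrow> ('v \<times> 'v) list \<Rightarrow> bool" where
  "cancel1 W W' \<longleftrightarrow> (\<exists>A B e. W = A @ [e, einv e] @ B \<and> W' = A @ B)"

text \<open>The (unique) reduced walk obtained by repeatedly deleting such pairs.\<close>
definition reduce :: "('v \<times> 'v) list \<Rightarrow> ('v \<times> 'v) list" where
  "reduce W = (THE R. cancel1\<^sup>*\<^sup>* W R \<and> reduced R)"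

definition gmult :: "('v \<times> 'v) list \<Rightarrow> ('v \<times> 'v) list \<Rightarrow> ('v \<times> 'v) list" where
  "gmult A B = reduce (A @ B)"

definition wmap :: "('a \<Rightarrow> 'b) \<Rightarrow> ('a \<times> 'a) list \<Rightarrow> ('b \<times> 'b) list" where
  "wmap \<sigma> W = map (\<lambda>(x, y). (\<sigma> x, \<sigma> y)) W"

definition hcoloring ::
  "'a set \<Rightarrow> ('a \<Rightarrow> 'a \<Rightarrow> bool) \<Rightarrow> 'b set \<Rightarrow> ('b \<Rightarrow> 'b \<Rightarrow> bool) \<Rightarrow> ('a \<Rightarrow> 'b) \<Rightarrow> bool" where
  "hcoloring VG EG VH EH \<sigma> \<longleftrightarrow> (\<forall>v\<in>VG. \<sigma> v \<in> VH) \<and> (\<forall>u v. EG u v \<longrightarrow> EH (\<sigma> u) (\<sigma> v))"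

definition recoloring_seq ::
  "'a set \<Rightarrow> ('a \<Rightarrow> 'a \<Rightarrow> bool) \<Rightarrow> 'b set \<Rightarrow> ('b \<Rightarrow> 'b \<Rightarrow> bool) \<Rightarrow> ('a \<Rightarrow> 'b) list \<Rightarrow> bool" where
  "recoloring_seq VG EG VH EH S \<longleftrightarrow> S \<noteq> [] \<and> (\<forall>\<sigma>\<in>set S. hcoloring VG EG VH EH \<sigma>) \<and>
     (\<forall>i. Suc i < length S \<longrightarrow> card {v\<in>VG. (S ! i) v \<noteq> (S ! Suc i) v} = 1)"

text \<open>Vertex walk of a one-step sequence \<sigma>,\<tau>: for the recolored vertex w (colour a to b),
S(w) = (a,h)(h,b) with h the unique element of N(a) \<inter> N(b); S(v) = \<epsilon> otherwise.\<close>
definition step_walk :: "('b \<Rightarrow> 'b \<Rightarrow> bool) \<Rightarrow> ('a \<Rightarrow> 'b) \<Rightarrow> ('a \<Rightarrow> 'b) \<Rightarrow> 'a \<Rightarrow> ('b \<times> 'b) list" where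
  "step_walk EH \<sigma> \<tau> v =
     (if \<sigma> v = \<tau> v then []
      else (let h = (THE h. h \<in> nbhd EH (\<sigma> v) \<inter> nbhd EH (\<tau> v)) in [(\<sigma> v, h), (h, \<tau> v)]))"

definition vertex_walk :: "('b \<Rightarrow> 'b \<Rightarrow> bool) \<Rightarrow> ('a \<Rightarrow> 'b) list \<Rightarrow> 'a \<Rightarrow> ('b \<times> 'b) list" where
  "vertex_walk EH S v = concat (map (\<lambda>i. step_walk EH (S ! i) (S ! Suc i) v) [0..<length S - 1])"

end

theory Submission
  imports Defs
begin

(* Write A ~ B when the walks A and B have the same reduction.
   (1) Free reduction: reduction is computed by a stack function red (push the edges of a
       walk one at a time, cancelling against the top); red W is reduced and reachable from W
       by cancellations, and it is invariant under cancellations, so reduce = red.  Hence ~ is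
       a congruence for concatenation, compatible with inversion, and winv W @ W ~ [].
   (2) Local square: if a single vertex is recoloured from sigma to tau and xy is an edge of G
       (loopless), then S(x) tau(xy) ~ sigma(xy) S(y); the monochromatic neighbourhood property
       identifies the middle vertex of the recoloured vertex's walk as the colour of its
       unchanged neighbour.
   (3) Induction along the recoloring sequence gives S(x) sigma_l(xy) ~ sigma_0(xy) S(y) for an
       edge, and induction along W gives S(u) sigma_l(W) ~ sigma_0(W) S(v).
   (4) Multiplying on the left by sigma_0(W)^-1 yields the theorem. *)

section \<open>Free reduction of walks\<close>

text \<open>Pushing an oriented edge in front of a reduced walk, cancelling it against the first edge
  if that is its inverse.  Folding from the right computes the reduction of a walk.\<close>

fun push :: "('v \<times> 'v) \<Rightarrow> ('v \<times> 'v) list \<Rightarrow> ('v \<times> 'v) list" where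
  "push e [] = [e]"
| "push e (f # R) = (if f = einv e then R else e # f # R)"

definition red :: "('v \<times> 'v) list \<Rightarrow> ('v \<times> 'v) list" where
  "red W = foldr push W []"

lemma einv_einv [simp]: "einv (einv e) = e"
  by (simp add: einv_def)

lemma winv_Cons: "winv (e # W) = winv W @ [einv e]"
  by (simp add: winv_def)

lemma reduced_Nil [simp]: "reduced []"
  and reduced_single [simp]: "reduced [e]"
  by (simp_all add: reduced_def)

lemma reduced_Cons2: "reduced (e # f # R) \<longleftrightarrow> f \<noteq> einv e \<and> reduced (f # R)"
proof
  assume red: "reduced (e # f # R)"
  have "f \<noteq> einv e" using red[unfolded reduced_def, rule_format, of 0] by simp
  moreover have "reduced (f # R)" unfolding reduced_def
  proof (intro allI impI)
    fix i assume "Suc i < length (f # R)"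
    then show "(f # R) ! Suc i \<noteq> einv ((f # R) ! i)"
      using red[unfolded reduced_def, rule_format, of "Suc i"] by simp
  qed
  ultimately show "f \<noteq> einv e \<and> reduced (f # R)" ..
next
  assume red: "f \<noteq> einv e \<and> reduced (f # R)"
  show "reduced (e # f # R)" unfolding reduced_def
  proof (intro allI impI)
    fix i assume i: "Suc i < length (e # f # R)"
    show "(e # f # R) ! Suc i \<noteq> einv ((e # f # R) ! i)"
    proof (cases i)
      case (Suc j)
      then show ?thesis using red[THEN conjunct2, unfolded reduced_def, rule_format, of j] i by simp
    qed (use red in simp)
  qed
qed

lemma reduced_tl: "reduced (e # R) \<Longrightarrow> reduced R"
  by (cases R) (auto simp: reduced_Cons2)

lemma push_reduced: "reduced R \<Longrightarrow> reduced (push e R)"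
  by (cases R) (auto simp: reduced_Cons2 dest: reduced_tl)

lemma red_reduced: "reduced (red W)"
  by (induction W) (auto simp: red_def push_reduced)

lemma red_of_reduced: "reduced R \<Longrightarrow> red R = R"
proof (induction R)
  case (Cons e R)
  then have "red R = R" using reduced_tl by blast
  with Cons.prems show ?case by (cases R) (auto simp: red_def reduced_Cons2)
qed (simp add: red_def)

text \<open>Pushing an edge and then its inverse does nothing to a reduced walk; this is why a
  single cancellation does not change red.\<close>
lemma push_push_einv:
  assumes "reduced R" shows "push e (push (einv e) R) = R"
proof (cases R)
  case (Cons f R')
  with assms show ?thesis by (cases "f = e"; cases R') (auto simp: reduced_Cons2)
qed simp

lemma red_append: "red (A @ B) = foldr push A (red B)"
  by (simp add: red_def)

lemma red_cancel1: "cancel1 W W' \<Longrightarrow> red W = red W'"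
  unfolding cancel1_def
  by (auto simp: red_append push_push_einv[OF red_reduced] simp del: append.simps foldr_append)

lemma red_cancellations: "cancel1\<^sup>*\<^sup>* W R \<Longrightarrow> red W = red R"
  by (induction rule: rtranclp_induct) (auto dest: red_cancel1)

lemma cancel1_ctx: "cancel1 W W' \<Longrightarrow> cancel1 (C @ W @ D) (C @ W' @ D)"
  unfolding cancel1_def by (metis append.assoc)

lemma cancellations_ctx: "cancel1\<^sup>*\<^sup>* W W' \<Longrightarrow> cancel1\<^sup>*\<^sup>* (C @ W @ D) (C @ W' @ D)"
  by (induction rule: rtranclp_induct) (auto intro: rtranclp.rtrancl_into_rtrancl cancel1_ctx)

lemma cancellations_to_red: "cancel1\<^sup>*\<^sup>* W (red W)"
proof (induction W)
  case (Cons e W)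
  have "cancel1\<^sup>*\<^sup>* (e # W) (e # red W)"
    using cancellations_ctx[OF Cons, of "[e]" "[]"] by simp
  moreover have "cancel1\<^sup>*\<^sup>* (e # red W) (push e (red W))"
  proof (cases "red W")
    case (Cons f R)
    have "cancel1 (e # einv e # R) R"
      unfolding cancel1_def by (intro exI[of _ "[]"] exI[of _ R] exI[of _ e]) simp
    with Cons show ?thesis by auto
  qed simp
  ultimately show ?case by (simp add: red_def)
qed (simp add: red_def)

lemma reduce_eq_red: "reduce W = red W"
  unfolding reduce_def
proof (rule the_equality)
  show "cancel1\<^sup>*\<^sup>* W (red W) \<and> reduced (red W)"
    using cancellations_to_red red_reduced by blast
qed (metis red_cancellations red_of_reduced)

section \<open>Groupoid laws for reduction\<close>

lemma red_absorb: "red (C @ red M @ D) = red (C @ M @ D)"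
  using red_cancellations[OF cancellations_ctx[OF cancellations_to_red[of M], of C D]] by simp

lemma red_cong: "red M = red M' \<Longrightarrow> red (C @ M @ D) = red (C @ M' @ D)"
  by (metis red_absorb)

lemma gmult_reduce: "gmult (reduce A) (reduce B) = reduce (A @ B)"
  using red_absorb[of "[]" A "red B"] red_absorb[of A B "[]"]
  by (simp add: gmult_def reduce_eq_red)

lemma reduced_winv: "reduced R \<Longrightarrow> reduced (winv R)"
  unfolding reduced_def winv_def
proof (intro allI impI)
  fix i assume red: "\<forall>i. Suc i < length R \<longrightarrow> R ! Suc i \<noteq> einv (R ! i)"
    and i: "Suc i < length (rev (map einv R))"
  define j where "j = length R - Suc (Suc i)"
  have j: "Suc j < length R" "length R - Suc i = Suc j" "length R - Suc (Suc i) = j"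
    using i by (auto simp: j_def)
  show "rev (map einv R) ! Suc i \<noteq> einv (rev (map einv R) ! i)"
    using i j red[rule_format, of j] by (auto simp: rev_nth)
qed

lemma cancel1_winv: "cancel1 W W' \<Longrightarrow> cancel1 (winv W) (winv W')"
  unfolding cancel1_def winv_def
  by (auto simp: einv_def) (metis einv_def fst_conv snd_conv)

lemma cancellations_winv: "cancel1\<^sup>*\<^sup>* W W' \<Longrightarrow> cancel1\<^sup>*\<^sup>* (winv W) (winv W')"
  by (induction rule: rtranclp_induct) (auto intro: rtranclp.rtrancl_into_rtrancl cancel1_winv)

lemma winv_reduce: "winv (reduce X) = reduce (winv X)"
  using red_cancellations[OF cancellations_winv[OF cancellations_to_red[of X]]]
    red_of_reduced[OF reduced_winv[OF red_reduced[of X]]]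
  by (simp add: reduce_eq_red)

lemma winv_append_cancel: "cancel1\<^sup>*\<^sup>* (winv W @ W @ D) D"
proof (induction W arbitrary: D)
  case (Cons e W)
  have "cancel1 (winv W @ [einv e, e] @ W @ D) (winv W @ W @ D)"
    unfolding cancel1_def by (intro exI[of _ "winv W"] exI[of _ "W @ D"] exI[of _ "einv e"]) simp
  with Cons.IH show ?case by (auto simp: winv_Cons intro: converse_rtranclp_into_rtranclp)
qed (simp add: winv_def)

section \<open>The local square for a single recoloring step\<close>

lemma the_common_neighbour:
  assumes "graph VH EH" and "monochromatic_nbhd VH EH"
    and "a \<in> VH" "b \<in> VH" "a \<noteq> b" and "EH a h" "EH b h"
  shows "(THE h. h \<in> nbhd EH a \<inter> nbhd EH b) = h"
proof (rule the_equality)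
  show h: "h \<in> nbhd EH a \<inter> nbhd EH b" using assms(6,7) by (simp add: nbhd_def)
  have "nbhd EH a \<inter> nbhd EH b \<subseteq> VH" using assms(1) unfolding graph_def nbhd_def by blast
  then have "finite (nbhd EH a \<inter> nbhd EH b)"
    using assms(1) finite_subset unfolding graph_def by blast
  moreover have "card (nbhd EH a \<inter> nbhd EH b) \<le> 1"
    using assms(2-5) unfolding monochromatic_nbhd_def by blast
  ultimately show "h' = h" if "h' \<in> nbhd EH a \<inter> nbhd EH b" for h'
    using h that card_le_Suc0_iff_eq by auto
qed

lemma step_walk_recoloured:
  assumes "graph VH EH" and "monochromatic_nbhd VH EH"
    and "hcoloring VG EG VH EH \<sigma>" "hcoloring VG EG VH EH \<tau>"
    and "z \<in> VG" "\<sigma> z \<noteq> \<tau> z" and "EG z z'" "\<sigma> z' = \<tau> z'"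
  shows "step_walk EH \<sigma> \<tau> z = [(\<sigma> z, \<sigma> z'), (\<sigma> z', \<tau> z)]"
proof -
  have "\<sigma> z \<in> VH" "\<tau> z \<in> VH" "EH (\<sigma> z) (\<sigma> z')" "EH (\<tau> z) (\<sigma> z')"
    using assms(3-8) unfolding hcoloring_def by metis+
  then show ?thesis
    using the_common_neighbour[OF assms(1,2)] assms(6) by (simp add: step_walk_def Let_def)
qed

text \<open>For a one-step recoloring sigma, tau and an edge xy of the loopless graph G,
  the square S(x) tau(xy) ~ sigma(xy) S(y) commutes: at most one of x, y is recoloured, and
  the two sides differ by a backtrack.\<close>
lemma one_step_square:
  assumes gG: "graph VG EG" and loopless: "\<forall>x. \<not> EG x x"
    and gH: "graph VH EH" and mono: "monochromatic_nbhd VH EH"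
    and col: "hcoloring VG EG VH EH \<sigma>" "hcoloring VG EG VH EH \<tau>"
    and one: "card {v\<in>VG. \<sigma> v \<noteq> \<tau> v} = 1" and e: "EG x y"
  shows "red (step_walk EH \<sigma> \<tau> x @ [(\<tau> x, \<tau> y)]) = red ([(\<sigma> x, \<sigma> y)] @ step_walk EH \<sigma> \<tau> y)"
proof -
  have xy: "x \<in> VG" "y \<in> VG" "EG y x" using gG e unfolding graph_def by blast+
  obtain w where w: "{v\<in>VG. \<sigma> v \<noteq> \<tau> v} = {w}" using one card_1_singletonE by blast
  have one_recoloured: "\<sigma> x = \<tau> x \<or> \<sigma> y = \<tau> y"
  proof (rule ccontr)
    assume "\<not> (\<sigma> x = \<tau> x \<or> \<sigma> y = \<tau> y)"
    with xy have "x \<in> {w}" "y \<in> {w}" unfolding w[symmetric] by auto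
    with loopless e show False by auto
  qed
  have backtrack: "red ([] @ [(a, b), einv (a, b)] @ C) = red C" for a b C
    by (rule red_cancel1) (unfold cancel1_def, blast)
  consider "\<sigma> x = \<tau> x" "\<sigma> y = \<tau> y" | "\<sigma> x = \<tau> x" "\<sigma> y \<noteq> \<tau> y" | "\<sigma> x \<noteq> \<tau> x" "\<sigma> y = \<tau> y"
    using one_recoloured by blast
  then show ?thesis
  proof cases
    case 1
    then show ?thesis by (simp add: step_walk_def)
  next
    case 2
    then have "step_walk EH \<sigma> \<tau> y = [(\<sigma> y, \<sigma> x), (\<sigma> x, \<tau> y)]"
      using step_walk_recoloured[OF gH mono col xy(2) _ xy(3)] by simp
    with 2 backtrack[of "\<sigma> x" "\<sigma> y" "[(\<sigma> x, \<tau> y)]"] show ?thesis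
      by (simp add: step_walk_def einv_def)
  next
    case 3
    then have "step_walk EH \<sigma> \<tau> x = [(\<sigma> x, \<sigma> y), (\<sigma> y, \<tau> x)]"
      using step_walk_recoloured[OF gH mono col xy(1) _ e] by simp
    with 3 red_cong[OF backtrack[of "\<sigma> y" "\<tau> x" "[]"], of "[(\<sigma> x, \<sigma> y)]" "[]"] show ?thesis
      by (simp add: step_walk_def einv_def)
  qed
qed

section \<open>Naturality along recoloring sequences and walks\<close>

lemma vertex_walk_single [simp]: "vertex_walk EH [\<sigma>] v = []"
  by (simp add: vertex_walk_def)

lemma vertex_walk_Cons2:
  "vertex_walk EH (\<sigma> # \<tau> # R) v = step_walk EH \<sigma> \<tau> v @ vertex_walk EH (\<tau> # R) v"
proof -
  have "[0..<length (\<sigma> # \<tau> # R) - 1] = 0 # map Suc [0..<length (\<tau> # R) - 1]"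
    by (simp add: upt_conv_Cons map_Suc_upt del: upt_Suc)
  then show ?thesis by (simp add: vertex_walk_def comp_def)
qed

lemma recoloring_seq_Cons2:
  assumes "recoloring_seq VG EG VH EH (\<sigma> # \<tau> # R)"
  shows "recoloring_seq VG EG VH EH (\<tau> # R)"
    and "hcoloring VG EG VH EH \<sigma>" "hcoloring VG EG VH EH \<tau>"
    and "card {v\<in>VG. \<sigma> v \<noteq> \<tau> v} = 1"
proof -
  have "card {v \<in> VG. ((\<tau> # R) ! i) v \<noteq> ((\<tau> # R) ! Suc i) v} = 1"
    if "Suc i < length (\<tau> # R)" for i
    using assms that unfolding recoloring_seq_def by (metis Suc_less_eq length_Cons nth_Cons_Suc)
  with assms show "recoloring_seq VG EG VH EH (\<tau> # R)" unfolding recoloring_seq_def by simp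
  from assms show "hcoloring VG EG VH EH \<sigma>" "hcoloring VG EG VH EH \<tau>"
    and "card {v\<in>VG. \<sigma> v \<noteq> \<tau> v} = 1"
    unfolding recoloring_seq_def by (auto dest: spec[of _ 0])
qed

lemma edge_square:
  assumes gG: "graph VG EG" and loopless: "\<forall>x. \<not> EG x x"
    and gH: "graph VH EH" and mono: "monochromatic_nbhd VH EH" and e: "EG x y"
    and "recoloring_seq VG EG VH EH S"
  shows "red (vertex_walk EH S x @ [(last S x, last S y)]) = red ([(hd S x, hd S y)] @ vertex_walk EH S y)"
  using assms(6)
proof (induction S rule: induct_list012)
  case (3 \<sigma> \<tau> R)
  note seq = recoloring_seq_Cons2[OF "3.prems"]
  let ?A = "step_walk EH \<sigma> \<tau> x" and ?B = "vertex_walk EH (\<tau> # R) x"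
  let ?C = "step_walk EH \<sigma> \<tau> y" and ?D = "vertex_walk EH (\<tau> # R) y"
  have "red (vertex_walk EH (\<sigma> # \<tau> # R) x @ [(last (\<sigma> # \<tau> # R) x, last (\<sigma> # \<tau> # R) y)])
      = red (?A @ (?B @ [(last (\<tau> # R) x, last (\<tau> # R) y)]) @ [])"
    by (simp add: vertex_walk_Cons2)
  also have "\<dots> = red (?A @ ([(\<tau> x, \<tau> y)] @ ?D) @ [])"
    using red_cong[OF "3.IH"(2)[OF seq(1)], of ?A "[]"] by simp
  also have "\<dots> = red ([] @ (?A @ [(\<tau> x, \<tau> y)]) @ ?D)" by simp
  also have "\<dots> = red ([] @ ([(\<sigma> x, \<sigma> y)] @ ?C) @ ?D)"
    using red_cong one_step_square[OF gG loopless gH mono seq(2-4) e] by blast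
  also have "\<dots> = red ([(hd (\<sigma> # \<tau> # R) x, hd (\<sigma> # \<tau> # R) y)] @ vertex_walk EH (\<sigma> # \<tau> # R) y)"
    by (simp add: vertex_walk_Cons2)
  finally show ?case .
qed (simp_all add: recoloring_seq_def)

lemma walk_square:
  assumes gG: "graph VG EG" and loopless: "\<forall>x. \<not> EG x x"
    and gH: "graph VH EH" and mono: "monochromatic_nbhd VH EH"
    and S: "recoloring_seq VG EG VH EH S"
  shows "walk EG u W v \<Longrightarrow>
    red (vertex_walk EH S u @ wmap (last S) W) = red (wmap (hd S) W @ vertex_walk EH S v)"
proof (induction W arbitrary: u)
  case (Cons e W)
  obtain x where ex: "e = (u, x)" "EG u x" "walk EG x W v" using Cons.prems by (cases e) auto
  have "red (vertex_walk EH S u @ wmap (last S) (e # W))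
      = red ([] @ (vertex_walk EH S u @ [(last S u, last S x)]) @ wmap (last S) W)"
    by (simp add: wmap_def ex)
  also have "\<dots> = red ([] @ ([(hd S u, hd S x)] @ vertex_walk EH S x) @ wmap (last S) W)"
    using red_cong edge_square[OF gG loopless gH mono ex(2) S] by blast
  also have "\<dots> = red ([(hd S u, hd S x)] @ (vertex_walk EH S x @ wmap (last S) W) @ [])" by simp
  also have "\<dots> = red ([(hd S u, hd S x)] @ (wmap (hd S) W @ vertex_walk EH S v) @ [])"
    using red_cong Cons.IH[OF ex(3)] by blast
  also have "\<dots> = red (wmap (hd S) (e # W) @ vertex_walk EH S v)" by (simp add: wmap_def ex)
  finally show ?case .
qed (simp add: wmap_def)

theorem mainTheorem1:
  fixes VG :: "'a set" and EG :: "'a \<Rightarrow> 'a \<Rightarrow> bool"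
    and VH :: "'b set" and EH :: "'b \<Rightarrow> 'b \<Rightarrow> bool"
    and S :: "('a \<Rightarrow> 'b) list" and W :: "('a \<times> 'a) list" and u v :: 'a
  assumes "graph VG EG" and "connected_graph VG EG" and "\<forall>x. \<not> EG x x" and "\<exists>x y. EG x y"
    and "graph VH EH" and "connected_graph VH EH" and "\<exists>x y. EH x y"
    and "monochromatic_nbhd VH EH"
    and "recoloring_seq VG EG VH EH S"
    and "u \<in> VG" and "v \<in> VG" and "walk EG u W v"
  shows "reduce (vertex_walk EH S v) =
         gmult (gmult (winv (reduce (wmap (hd S) W))) (reduce (vertex_walk EH S u)))
               (reduce (wmap (last S) W))"
proof -
  let ?X = "wmap (hd S) W" and ?Y = "wmap (last S) W"
  let ?Su = "vertex_walk EH S u" and ?Sv = "vertex_walk EH S v"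
  have square: "red (?Su @ ?Y) = red (?X @ ?Sv)"
    using walk_square[OF assms(1,3,5,8,9,12)] .
  have "gmult (gmult (winv (reduce ?X)) (reduce ?Su)) (reduce ?Y) = reduce ((winv ?X @ ?Su) @ ?Y)"
    unfolding winv_reduce gmult_reduce ..
  also have "\<dots> = red (winv ?X @ (?X @ ?Sv) @ [])"
    using red_cong[OF square, of "winv ?X" "[]"] by (simp add: reduce_eq_red)
  also have "\<dots> = reduce ?Sv"
    using red_cancellations[OF winv_append_cancel] by (simp add: reduce_eq_red)
  finally show ?thesis ..
qed

end
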